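(* Consider the iterates $\{x_k,y_k,z_k\}$ of the AdaSMSAG method described in the context, and let $x^*$ be an optimal solution of $\min_{x\in X}\psi(x)$. For $k\ge 0$ let $D_k^2:=\frac{\|x^*-z_k\|^2}{2}$. If, for a given $k\ge 1$, $\alpha_k\beta_k-\theta_k\le 0$, then $$\langle G_k,\;y_k-\alpha_k x^*-(1-\alpha_k)y_{k-1}\rangle\le -\frac{\beta_k}{2}\|y_k-x_k\|^2+\alpha_k\theta_k\left(D_{k-1}^2-D_k^2\right).$$
   Context: Setting: $X\subseteq\mathbb{R}^n$ is a nonempty closed convex set; $\psi=f+h$ where $f(x)=E[F(x,\xi)]$, $h(x)=E[H(x,\xi)]$, $\xi$ a random vector supported on $\Xi\subseteq\mathbb{R}^d$, $F(\cdot,\xi)$ convex with Lipschitz continuous gradient and $H(\cdot,\xi)$ convex (possibly nonsmooth) for every $\xi$. $\{\tilde h_\mu\}_{\mu\in(0,\bar\mu]}$ is a smoothing function of $h$ on $X$ (each $\tilde h_\mu$ continuously differentiable and convex on $X$, $|\tilde h_{\mu_2}(x)-\tilde h_{\mu_1}(x)|\le\kappa|\mu_1-\mu_2|$, $\nabla\tilde h_\mu$ is $L/\mu$-Lipschitz on $X$, and $\tilde h_\mu(z)\to h(x)$ as $z\to x,\mu\downarrow0$), and $\tilde\psi_\mu:=f+\tilde h_\mu$. A stochastic first-order oracle returns, for input $x\in X$, $\mu>0$ and a sample $\xi$, a vector $\nabla\tilde\Psi_\mu(x,\xi)$. AdaSMSAG method: inputs are $N\ge1$, batch sizes $m_k\ge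 1$, $\alpha_k\in(0,1)$, $c>0$, $\mu_0>0$, $\beta_k>0$, $\theta_k>0$, and $z_0=y_0\in X$. For $k=1,\dots,N$: $x_k=\alpha_k z_{k-1}+(1-\alpha_k)y_{k-1}$; $\mu_k=\frac{c\mu_0}{k+c}$; draw samples $\xi_{k,1},\dots,\xi_{k,m_k}$ and set $G_k:=\frac1{m_k}\sum_{i=1}^{m_k}\nabla\tilde\Psi_{\mu_k}(x_k,\xi_{k,i})$; $y_k=\arg\min_{y\in X}\{\langle G_k,y-x_k\rangle+\frac{\beta_k}{2}\|y-x_k\|^2\}$; $z_k=\arg\min_{x\in X}\{\langle G_k,x-x_k\rangle+\frac{\theta_k}{2}\|x-z_{k-1}\|^2\}$. Output $y_N$. *)

theory Defs
  imports "HOL-Analysis.Analysis"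
begin

end

theory Submission
  imports Defs
begin

text \<open>Write \<open>x = \<alpha> z' + (1 - \<alpha>) y'\<close> for the extrapolated point. Comparing the \<open>\<beta>\<close>-prox point \<open>y\<close>
  with the feasible competitor \<open>\<alpha> z + (1 - \<alpha>) y'\<close>, which lies at distance \<open>\<alpha> \<parallel>z - z'\<parallel>\<close> from \<open>x\<close>,
  bounds the \<open>y\<close>-part of the left-hand side. The \<open>\<theta>\<close>-prox point \<open>z\<close> satisfies the three-point
  inequality \<open>\<langle>g, z - u\<rangle> \<le> \<theta>/2 (\<parallel>u - z'\<parallel>\<^sup>2 - \<parallel>u - z\<parallel>\<^sup>2 - \<parallel>z - z'\<parallel>\<^sup>2)\<close>, obtained from its first-order
  optimality condition. Adding the two, the terms in \<open>\<parallel>z - z'\<parallel>\<^sup>2\<close> carry the coefficient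
  \<open>\<alpha> (\<alpha> \<beta> - \<theta>) / 2\<close>, which is nonpositive by hypothesis.\<close>

lemma nonneg_if_linear_plus_quadratic_nonneg:
  fixes a b :: real
  assumes "\<And>t. 0 < t \<Longrightarrow> t \<le> 1 \<Longrightarrow> 0 \<le> t * a + t\<^sup>2 * b"
  shows "0 \<le> a"
proof -
  have "((\<lambda>t. a + t * b) \<longlongrightarrow> a) (at_right 0)"
    by (auto intro!: tendsto_eq_intros)
  moreover have "\<forall>\<^sub>F t in at_right 0. 0 \<le> a + t * b"
  proof -
    have "0 \<le> a + t * b" if "0 < t" "t < 1" for t :: real
    proof -
      have "0 \<le> t * (a + t * b)"
        using assms[of t] that by (simp add: power2_eq_square algebra_simps)
      then show ?thesis
        using that by (simp add: zero_le_mult_iff)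
    qed
    then show ?thesis
      using eventually_at_right_real[of 0 1] by (auto elim: eventually_mono)
  qed
  ultimately show ?thesis
    by (rule tendsto_lowerbound) simp
qed

lemma prox_arg_min_variational_ineq:
  fixes g a b z u :: "'a::real_inner"
  assumes "convex X" "u \<in> X"
    and "is_arg_min (\<lambda>v. inner g (v - a) + \<theta> / 2 * (norm (v - b))\<^sup>2) (\<lambda>v. v \<in> X) z"
  shows "0 \<le> inner g (u - z) + \<theta> * inner (z - b) (u - z)"
proof (rule nonneg_if_linear_plus_quadratic_nonneg)
  fix t :: real
  assume t: "0 < t" "t \<le> 1"
  have "z \<in> X"
    using assms(3) by (simp add: is_arg_min_def)
  then have "z + t *\<^sub>R (u - z) \<in> X"
    using assms(1,2) t convexD[of X z u "1 - t" t] by (simp add: algebra_simps)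
  then have "inner g (z - a) + \<theta> / 2 * (norm (z - b))\<^sup>2
      \<le> inner g (z + t *\<^sub>R (u - z) - a) + \<theta> / 2 * (norm ((z - b) + t *\<^sub>R (u - z)))\<^sup>2"
    using assms(3) by (auto simp: is_arg_min_linorder algebra_simps)
  then show "0 \<le> t * (inner g (u - z) + \<theta> * inner (z - b) (u - z)) + t\<^sup>2 * (\<theta> / 2 * (norm (u - z))\<^sup>2)"
    unfolding power2_norm_eq_inner
    by (simp add: inner_add_left inner_add_right inner_diff_right inner_commute
        power2_eq_square algebra_simps)
qed

lemma prox_arg_min_three_point:
  fixes g a b z u :: "'a::real_inner"
  assumes "convex X" "u \<in> X"
    and "is_arg_min (\<lambda>v. inner g (v - a) + \<theta> / 2 * (norm (v - b))\<^sup>2) (\<lambda>v. v \<in> X) z"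
  shows "inner g (z - u) \<le> \<theta> / 2 * ((norm (u - b))\<^sup>2 - (norm (u - z))\<^sup>2 - (norm (z - b))\<^sup>2)"
proof -
  have "(norm (u - b))\<^sup>2 - (norm (u - z))\<^sup>2 - (norm (z - b))\<^sup>2 = 2 * inner (z - b) (u - z)"
    using dot_norm[of "z - b" "u - z"] by simp
  moreover have "inner g (z - u) = - inner g (u - z)"
    by (simp add: inner_diff_right)
  ultimately show ?thesis
    using prox_arg_min_variational_ineq[OF assms] by simp
qed

lemma accelerated_prox_step_ineq:
  fixes g x y z y' z' u :: "'a::real_inner"
  assumes "convex X" "y' \<in> X" "u \<in> X"
    and "0 \<le> \<alpha>" "\<alpha> \<le> 1" "\<alpha> * \<beta> \<le> \<theta>"
    and x: "x = \<alpha> *\<^sub>R z' + (1 - \<alpha>) *\<^sub>R y'"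
    and y: "is_arg_min (\<lambda>v. inner g (v - x) + \<beta> / 2 * (norm (v - x))\<^sup>2) (\<lambda>v. v \<in> X) y"
    and z: "is_arg_min (\<lambda>v. inner g (v - x) + \<theta> / 2 * (norm (v - z'))\<^sup>2) (\<lambda>v. v \<in> X) z"
  shows "inner g (y - \<alpha> *\<^sub>R u - (1 - \<alpha>) *\<^sub>R y')
    \<le> - (\<beta> / 2) * (norm (y - x))\<^sup>2 + \<alpha> * \<theta> * ((norm (u - z'))\<^sup>2 / 2 - (norm (u - z))\<^sup>2 / 2)"
proof -
  define w where "w = \<alpha> *\<^sub>R z + (1 - \<alpha>) *\<^sub>R y'"
  define D where "D = (norm (z - z'))\<^sup>2"
  have "z \<in> X"
    using z by (simp add: is_arg_min_def)
  then have "w \<in> X"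
    using assms(1,2,4,5) by (simp add: w_def convexD)
  then have "inner g (y - x) + \<beta> / 2 * (norm (y - x))\<^sup>2 \<le> inner g (w - x) + \<beta> / 2 * (norm (w - x))\<^sup>2"
    using y by (simp add: is_arg_min_linorder)
  moreover have "w - x = \<alpha> *\<^sub>R (z - z')"
    unfolding w_def x by (simp add: algebra_simps)
  ultimately have y_bound: "inner g (y - x) + \<beta> / 2 * (norm (y - x))\<^sup>2
      \<le> \<alpha> * inner g (z - z') + \<beta> / 2 * \<alpha>\<^sup>2 * D"
    using \<open>0 \<le> \<alpha>\<close> by (simp add: D_def power_mult_distrib)
  have z_bound: "\<alpha> * inner g (z - u) \<le> \<alpha> * (\<theta> / 2 * ((norm (u - z'))\<^sup>2 - (norm (u - z))\<^sup>2 - D))"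
    unfolding D_def
    using prox_arg_min_three_point[OF assms(1,3) z] \<open>0 \<le> \<alpha>\<close> by (rule mult_left_mono)
  have "\<alpha> * (\<alpha> * \<beta> - \<theta>) * D \<le> 0"
    using assms(4,6) by (simp add: D_def mult_nonneg_nonpos mult_nonpos_nonneg)
  moreover have "inner g (y - \<alpha> *\<^sub>R u - (1 - \<alpha>) *\<^sub>R y')
      = inner g (y - x) - \<alpha> * inner g (z - z') + \<alpha> * inner g (z - u)"
  proof -
    have "y - \<alpha> *\<^sub>R u - (1 - \<alpha>) *\<^sub>R y' = (y - x) - \<alpha> *\<^sub>R (z - z') + \<alpha> *\<^sub>R (z - u)"
      unfolding x by (simp add: algebra_simps)
    then show ?thesis
      by (simp only: inner_diff_right inner_add_right inner_scaleR_right)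
  qed
  ultimately show ?thesis
    using y_bound z_bound by (simp add: power2_eq_square algebra_simps)
qed

theorem lemma4:
  fixes X :: "'a::euclidean_space set"
    and psi :: "'a \<Rightarrow> real"
    and SFO :: "'a \<Rightarrow> real \<Rightarrow> 'b \<Rightarrow> 'a"
    and xi :: "nat \<Rightarrow> nat \<Rightarrow> 'b"
    and N :: nat and m :: "nat \<Rightarrow> nat"
    and alpha beta theta :: "nat \<Rightarrow> real"
    and c mu0 :: real
    and x y z G :: "nat \<Rightarrow> 'a"
    and mu :: "nat \<Rightarrow> real"
    and xstar :: 'a and k :: nat
  assumes X: "X \<noteq> {}" "closed X" "convex X"
    and N: "N \<ge> 1"
    and m: "\<And>j. m j \<ge> 1"
    and alpha: "\<And>j. 0 < alpha j \<and> alpha j < 1"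
    and c: "c > 0" and mu0: "mu0 > 0"
    and beta: "\<And>j. beta j > 0" and theta: "\<And>j. theta j > 0"
    and init: "z 0 = y 0" "y 0 \<in> X"
    and x_def: "\<And>j. 1 \<le> j \<Longrightarrow> j \<le> N \<Longrightarrow>
                  x j = alpha j *\<^sub>R z (j - 1) + (1 - alpha j) *\<^sub>R y (j - 1)"
    and mu_def: "\<And>j. 1 \<le> j \<Longrightarrow> j \<le> N \<Longrightarrow> mu j = c * mu0 / (real j + c)"
    and G_def: "\<And>j. 1 \<le> j \<Longrightarrow> j \<le> N \<Longrightarrow>
                  G j = (1 / real (m j)) *\<^sub>R (\<Sum>i=1..m j. SFO (x j) (mu j) (xi j i))"
    and y_def: "\<And>j. 1 \<le> j \<Longrightarrow> j \<le> N \<Longrightarrow>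
                  is_arg_min (\<lambda>v. inner (G j) (v - x j) + beta j / 2 * (norm (v - x j))\<^sup>2)
                             (\<lambda>v. v \<in> X) (y j)"
    and z_def: "\<And>j. 1 \<le> j \<Longrightarrow> j \<le> N \<Longrightarrow>
                  is_arg_min (\<lambda>v. inner (G j) (v - x j) + theta j / 2 * (norm (v - z (j - 1)))\<^sup>2)
                             (\<lambda>v. v \<in> X) (z j)"
    and opt: "xstar \<in> X" "\<And>v. v \<in> X \<Longrightarrow> psi xstar \<le> psi v"
    and k: "1 \<le> k" "k \<le> N"
    and cond: "alpha k * beta k - theta k \<le> 0"
  shows "inner (G k) (y k - alpha k *\<^sub>R xstar - (1 - alpha k) *\<^sub>R y (k - 1))
         \<le> - (beta k / 2) * (norm (y k - x k))\<^sup>2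
           + alpha k * theta k * ((norm (xstar - z (k - 1)))\<^sup>2 / 2 - (norm (xstar - z k))\<^sup>2 / 2)"
proof -
  have "y (k - 1) \<in> X"
  proof (cases "k = 1")
    case True
    then show ?thesis using init by simp
  next
    case False
    then show ?thesis using y_def[of "k - 1"] k by (simp add: is_arg_min_def)
  qed
  moreover have "0 \<le> alpha k" "alpha k \<le> 1"
    using alpha[of k] by simp_all
  ultimately show ?thesis
    using accelerated_prox_step_ineq[OF X(3) _ opt(1) _ _ _ x_def[OF k] y_def[OF k] z_def[OF k]] cond
    by simp
qed

end
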